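(* Let $\mathbf{A}_b\in\{0,1\}^{|\mathcal{U}|\times|\mathcal{I}|}$ be the bi-adjacency matrix of a user-item bipartite graph for behavior $b$, and let $\tilde{\mathbf{A}}_b$ be its symmetrically normalized version. Let $\alpha,\beta\ge 0$ with $\gamma = 1-\alpha-\beta\in(0,1)$. Fix vectors $\mathbf{q}_{\mathcal{U}_b},\mathbf{r}_{\mathcal{U}_{b'}}\in\mathbb{R}^{|\mathcal{U}|}$ and $\mathbf{q}_{\mathcal{I}_b},\mathbf{r}_{\mathcal{I}_{b'}}\in\mathbb{R}^{|\mathcal{I}|}$, and starting vectors $\mathbf{r}^{(0)}_{\mathcal{U}_b}$ and $\mathbf{r}^{(0)}_{\mathcal{I}_b}$ (in the algorithm these are $\mathbf{q}_{\mathcal{U}_b}$ and $\mathbf{q}_{\mathcal{I}_b}$). Consider the power iteration, for $k\ge 1$, $$\mathbf{r}^{(k)}_{\mathcal{U}_b} = \gamma\,\tilde{\mathbf{A}}_b\,\mathbf{r}^{(k-1)}_{\mathcal{I}_b} + \alpha\,\mathbf{q}_{\mathcal{U}_b} + \beta\,\mathbf{r}_{\mathcal{U}_{b'}},$$ $$\mathbf{r}^{(k)}_{\mathcal{I}_b} = \gamma\,\tilde{\mathbf{A}}_b^{\top}\,\mathbf{r}^{(k-1)}_{\mathcal{U}_b} + \alpha\,\mathbf{q}_{\mathcal{I}_b} + \beta\,\mathbf{r}_{\mathcal{I}_{b'}}.$$ Then the sequences $\mathbf{r}^{(k)}_{\mathcal{U}_b}$ and $\mathbf{r}^{(k)}_{\mathcal{I}_b}$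 converge as $k\to\infty$.
   Context: Degrees: $d_b(u)=\sum_i\mathbf{A}_b(u,i)$ and $d_b(i)=\sum_u\mathbf{A}_b(u,i)$. The symmetrically normalized bi-adjacency matrix $\tilde{\mathbf{A}}_b$ has entries $\tilde{\mathbf{A}}_b(u,i)=\mathbf{A}_b(u,i)/(\sqrt{d_b(u)}\sqrt{d_b(i)})$ when $\mathbf{A}_b(u,i)=1$, and $0$ otherwise; equivalently $\tilde{\mathbf{A}}_b=\mathbf{D}_{\mathcal{U}_b}^{-1/2}\mathbf{A}_b\mathbf{D}_{\mathcal{I}_b}^{-1/2}$. Here $\mathbf{r}_{\mathcal{U}_{b'}}$ and $\mathbf{r}_{\mathcal{I}_{b'}}$ are the fixed ranking vectors of the preceding behavior $b'$ in the cascading sequence. The iteration is the inner loop of the CascadingRank algorithm when it is run without the early-stopping criterion. *)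

theory Defs
  imports "HOL-Analysis.Analysis"
begin

text \<open>Bi-adjacency matrix A_b of type real^'i^'u (rows = users, columns = items).\<close>

definition user_deg :: "real^'i^'u \<Rightarrow> 'u \<Rightarrow> real" where
  "user_deg A u = (\<Sum>i\<in>UNIV. A $ u $ i)"

definition item_deg :: "real^'i^'u \<Rightarrow> 'i \<Rightarrow> real" where
  "item_deg A i = (\<Sum>u\<in>UNIV. A $ u $ i)"

definition norm_biadj :: "real^'i^'u \<Rightarrow> real^'i^'u" where
  "norm_biadj A = (\<chi> u i. if A $ u $ i = 1
      then A $ u $ i / (sqrt (user_deg A u) * sqrt (item_deg A i)) else 0)"

text \<open>CascadingRank inner-loop power iteration (no early stopping).
  Returns the pair (user ranking r_U^(k), item ranking r_I^(k)).\<close>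
primrec cr_iter :: "real^'i^'u \<Rightarrow> real \<Rightarrow> real \<Rightarrow>
    real^'u \<Rightarrow> real^'i \<Rightarrow> real^'u \<Rightarrow> real^'i \<Rightarrow> real^'u \<Rightarrow> real^'i \<Rightarrow>
    nat \<Rightarrow> (real^'u) \<times> (real^'i)" where
  "cr_iter A \<alpha> \<beta> qU qI rU' rI' r0U r0I 0 = (r0U, r0I)"
| "cr_iter A \<alpha> \<beta> qU qI rU' rI' r0U r0I (Suc k) =
     (let (rU, rI) = cr_iter A \<alpha> \<beta> qU qI rU' rI' r0U r0I k;
          \<gamma> = 1 - \<alpha> - \<beta> in
      (\<gamma> *\<^sub>R (norm_biadj A *v rI) + \<alpha> *\<^sub>R qU + \<beta> *\<^sub>R rU',
       \<gamma> *\<^sub>R (transpose (norm_biadj A) *v rU) + \<alpha> *\<^sub>R qI + \<beta> *\<^sub>R rI'))"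

end

theory Submission
  imports Defs
begin

(* The update (r_U, r_I) \<mapsto> (\<gamma> M r_I + c_U, \<gamma> M\<^sup>T r_U + c_I), with M the normalized
   bi-adjacency matrix, is an affine map on the product space.  Writing each entry
   A(u,i) / (sqrt d(u) sqrt d(i)) as (A(u,i) / sqrt d(u)) * (A(u,i) / sqrt d(i)), the
   Cauchy-Schwarz inequality row by row shows that M and M\<^sup>T have operator norm at most 1.
   Hence the update is a contraction with constant \<gamma> < 1 for the Euclidean norm on pairs,
   and its iterates converge to the unique fixed point. *)

lemma power2_norm_vec_eq_sum: "(norm (x :: real^'n::finite))\<^sup>2 = (\<Sum>i\<in>UNIV. (x $ i)\<^sup>2)"
  unfolding power2_norm_eq_inner inner_vec_def by (simp add: power2_eq_square)

lemma norm_matrix_vector_mult_le_if_factors: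
  fixes M :: "real^'n::finite^'m::finite"
  assumes factor: "\<And>i j. M $ i $ j = a i j * b i j"
    and rows: "\<And>i. (\<Sum>j\<in>UNIV. (a i j)\<^sup>2) \<le> 1"
    and cols: "\<And>j. (\<Sum>i\<in>UNIV. (b i j)\<^sup>2) \<le> 1"
  shows "norm (M *v x) \<le> norm x"
proof -
  have row: "((M *v x) $ i)\<^sup>2 \<le> (\<Sum>j\<in>UNIV. (b i j * x $ j)\<^sup>2)" for i
  proof -
    have "((M *v x) $ i)\<^sup>2 = (\<Sum>j\<in>UNIV. a i j * (b i j * x $ j))\<^sup>2"
      by (simp add: matrix_vector_mult_def factor mult.assoc)
    also have "\<dots> \<le> (\<Sum>j\<in>UNIV. (a i j)\<^sup>2) * (\<Sum>j\<in>UNIV. (b i j * x $ j)\<^sup>2)"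
      by (rule Cauchy_Schwarz_ineq_sum)
    also have "\<dots> \<le> (\<Sum>j\<in>UNIV. (b i j * x $ j)\<^sup>2)"
      by (rule mult_left_le_one_le) (simp_all add: sum_nonneg rows)
    finally show ?thesis .
  qed
  have "(norm (M *v x))\<^sup>2 \<le> (\<Sum>i\<in>UNIV. \<Sum>j\<in>UNIV. (b i j * x $ j)\<^sup>2)"
    unfolding power2_norm_vec_eq_sum by (intro sum_mono row)
  also have "\<dots> = (\<Sum>j\<in>UNIV. (x $ j)\<^sup>2 * (\<Sum>i\<in>UNIV. (b i j)\<^sup>2))"
    by (subst sum.swap) (simp add: sum_distrib_left power_mult_distrib mult.commute)
  also have "\<dots> \<le> (\<Sum>j\<in>UNIV. (x $ j)\<^sup>2)"
    by (intro sum_mono mult_left_le) (simp_all add: cols)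
  finally show ?thesis
    unfolding power2_norm_vec_eq_sum[symmetric] by (rule power2_le_imp_le) simp
qed

lemma sum_power2_div_sqrt_sum_le_1:
  fixes x :: "'a \<Rightarrow> real"
  assumes "\<And>j. x j \<in> {0, 1}"
  shows "(\<Sum>j\<in>S. (x j / sqrt (\<Sum>k\<in>S. x k))\<^sup>2) \<le> 1"
proof -
  define s where "s = (\<Sum>k\<in>S. x k)"
  have "0 \<le> s"
    unfolding s_def using assms by (intro sum_nonneg) (metis empty_iff insert_iff order_refl zero_le_one)
  moreover have "(x j)\<^sup>2 = x j" for j
    using assms[of j] by auto
  ultimately have "(x j / sqrt s)\<^sup>2 = x j / s" for j
    by (simp add: power_divide)
  then have "(\<Sum>j\<in>S. (x j / sqrt s)\<^sup>2) = (\<Sum>j\<in>S. x j) / s"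
    by (simp add: sum_divide_distrib)
  also have "\<dots> = s / s"
    by (simp only: s_def)
  also have "\<dots> \<le> 1"
    by (cases "s = 0") simp_all
  finally show ?thesis
    unfolding s_def .
qed

lemma norm_biadj_factors:
  assumes "\<forall>u i. A $ u $ i \<in> {0, 1}"
  shows "norm_biadj A $ u $ i
           = (A $ u $ i / sqrt (user_deg A u)) * (A $ u $ i / sqrt (item_deg A i))"
  using assms unfolding norm_biadj_def by (cases "A $ u $ i = 1") auto

lemma
  fixes A :: "real^'i::finite^'u::finite"
  assumes A01: "\<forall>u i. A $ u $ i \<in> {0, 1}"
  shows norm_norm_biadj_mult_le: "norm (norm_biadj A *v y) \<le> norm y"
    and norm_transpose_norm_biadj_mult_le: "norm (transpose (norm_biadj A) *v x) \<le> norm x"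
proof -
  have user_sum: "(\<Sum>i\<in>UNIV. (A $ u $ i / sqrt (user_deg A u))\<^sup>2) \<le> 1" for u
    unfolding user_deg_def using A01 by (intro sum_power2_div_sqrt_sum_le_1) simp
  have item_sum: "(\<Sum>u\<in>UNIV. (A $ u $ i / sqrt (item_deg A i))\<^sup>2) \<le> 1" for i
    unfolding item_deg_def using A01 by (intro sum_power2_div_sqrt_sum_le_1) simp
  show "norm (norm_biadj A *v y) \<le> norm y"
    by (rule norm_matrix_vector_mult_le_if_factors[OF norm_biadj_factors[OF A01] user_sum item_sum])
  show "norm (transpose (norm_biadj A) *v x) \<le> norm x"
    by (rule norm_matrix_vector_mult_le_if_factors[OF _ item_sum user_sum])
      (simp add: transpose_def norm_biadj_factors[OF A01] mult.commute)
qed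

lemma norm_Pair_le_scaled_swap:
  assumes "norm x \<le> c * norm b" and "norm y \<le> c * norm a" and "0 \<le> c"
  shows "norm (x, y) \<le> c * norm (a, b)"
proof -
  have "(norm x)\<^sup>2 + (norm y)\<^sup>2 \<le> (c * norm b)\<^sup>2 + (c * norm a)\<^sup>2"
    using assms by (intro add_mono power_mono) auto
  also have "\<dots> = (c * norm (a, b))\<^sup>2"
    using assms(3) by (simp add: norm_Pair power_mult_distrib algebra_simps)
  finally show ?thesis
    unfolding norm_Pair by (rule real_sqrt_le_iff[THEN iffD2, THEN order_trans]) (simp add: assms(3))
qed

lemma convergent_funpow_contraction:
  fixes f :: "'a::complete_space \<Rightarrow> 'a"
  assumes "0 \<le> c" and "c < 1" and lipschitz: "\<And>x y. dist (f x) (f y) \<le> c * dist x y"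
  shows "convergent (\<lambda>k. (f ^^ k) z)"
proof -
  have "\<exists>!p. f p = p"
    by (rule banach_fix_type[OF assms(1,2)]) (use lipschitz in blast)
  then obtain p where "f p = p"
    by blast
  have dist_le: "dist ((f ^^ k) z) p \<le> c ^ k * dist z p" for k
  proof (induction k)
    case (Suc k)
    have "dist ((f ^^ Suc k) z) p \<le> c * dist ((f ^^ k) z) p"
      using lipschitz[of "(f ^^ k) z" p] \<open>f p = p\<close> by simp
    also have "\<dots> \<le> c ^ Suc k * dist z p"
      using mult_left_mono[OF Suc.IH \<open>0 \<le> c\<close>] by (simp add: mult.assoc)
    finally show ?case .
  qed simp
  have "(\<lambda>k. c ^ k * dist z p) \<longlonglongrightarrow> 0"
    using assms by (intro tendsto_mult_left_zero LIMSEQ_power_zero) simp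
  then have "(\<lambda>k. dist ((f ^^ k) z) p) \<longlonglongrightarrow> 0"
    by (rule Lim_null_comparison[rotated]) (simp add: dist_le)
  then have "(\<lambda>k. (f ^^ k) z) \<longlonglongrightarrow> p"
    by (rule tendsto_dist_iff[THEN iffD2])
  then show ?thesis
    unfolding convergent_def ..
qed

definition cr_step :: "real^'i^'u \<Rightarrow> real \<Rightarrow> real \<Rightarrow>
    real^'u \<Rightarrow> real^'i \<Rightarrow> real^'u \<Rightarrow> real^'i \<Rightarrow> (real^'u) \<times> (real^'i) \<Rightarrow> (real^'u) \<times> (real^'i)"
  where "cr_step A \<alpha> \<beta> qU qI rU' rI' = (\<lambda>(rU, rI).
     ((1 - \<alpha> - \<beta>) *\<^sub>R (norm_biadj A *v rI) + \<alpha> *\<^sub>R qU + \<beta> *\<^sub>R rU',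
      (1 - \<alpha> - \<beta>) *\<^sub>R (transpose (norm_biadj A) *v rU) + \<alpha> *\<^sub>R qI + \<beta> *\<^sub>R rI'))"

lemma cr_iter_eq_funpow_cr_step:
  "cr_iter A \<alpha> \<beta> qU qI rU' rI' r0U r0I k = (cr_step A \<alpha> \<beta> qU qI rU' rI' ^^ k) (r0U, r0I)"
  by (induction k) (simp_all add: cr_step_def Let_def split_beta)

lemma dist_cr_step_le:
  fixes A :: "real^'i::finite^'u::finite"
  assumes "\<forall>u i. A $ u $ i \<in> {0, 1}" and "0 \<le> 1 - \<alpha> - \<beta>"
  shows "dist (cr_step A \<alpha> \<beta> qU qI rU' rI' x) (cr_step A \<alpha> \<beta> qU qI rU' rI' y)
           \<le> (1 - \<alpha> - \<beta>) * dist x y"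
proof -
  define \<gamma> where "\<gamma> = 1 - \<alpha> - \<beta>"
  obtain xU xI yU yI where xy: "x = (xU, xI)" "y = (yU, yI)"
    by fastforce
  have "cr_step A \<alpha> \<beta> qU qI rU' rI' x - cr_step A \<alpha> \<beta> qU qI rU' rI' y
          = (\<gamma> *\<^sub>R (norm_biadj A *v (xI - yI)), \<gamma> *\<^sub>R (transpose (norm_biadj A) *v (xU - yU)))"
    by (simp add: xy cr_step_def \<gamma>_def matrix_vector_mult_diff_distrib scaleR_diff_right)
  moreover have "norm (norm_biadj A *v (xI - yI)) \<le> norm (xI - yI)"
    using assms(1) by (rule norm_norm_biadj_mult_le)
  moreover have "norm (transpose (norm_biadj A) *v (xU - yU)) \<le> norm (xU - yU)"
    using assms(1) by (rule norm_transpose_norm_biadj_mult_le)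
  ultimately show ?thesis
    using assms(2) unfolding dist_norm \<gamma>_def[symmetric]
    by (simp add: xy norm_Pair_le_scaled_swap mult_left_mono)
qed

theorem theorem2:
  fixes A :: "real^'i::finite^'u::finite"
    and \<alpha> \<beta> :: real
    and qU rU' r0U :: "real^'u"
    and qI rI' r0I :: "real^'i"
  assumes "\<forall>u i. A $ u $ i \<in> {0, 1}"
    and "\<alpha> \<ge> 0" and "\<beta> \<ge> 0"
    and "0 < 1 - \<alpha> - \<beta>" and "1 - \<alpha> - \<beta> < 1"
  shows "convergent (\<lambda>k. fst (cr_iter A \<alpha> \<beta> qU qI rU' rI' r0U r0I k))
       \<and> convergent (\<lambda>k. snd (cr_iter A \<alpha> \<beta> qU qI rU' rI' r0U r0I k))"
proof -
  have "convergent (\<lambda>k. cr_iter A \<alpha> \<beta> qU qI rU' rI' r0U r0I k)"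
    unfolding cr_iter_eq_funpow_cr_step
    using assms by (intro convergent_funpow_contraction[where c = "1 - \<alpha> - \<beta>"] dist_cr_step_le) auto
  then show ?thesis
    unfolding convergent_def by (blast intro: tendsto_fst tendsto_snd)
qed

end
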